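(* Let $m$ be a positive integer and let $D$ be a quaternary near-extremal Hermitian self-dual code of length $6m$. Let $A_{2m}$ denote the number of codewords of weight $2m$ in $D$. Then $A_{2m}\equiv 0 \pmod 9$.
   Context: Let $\mathbb{F}_4=\{0,1,\omega,\omega^2\}$ with $\omega^2=\omega+1$. A quaternary code of length $n$ is a linear subspace of $\mathbb{F}_4^n$; with $\langle x,y\rangle_H=\sum_{k} x_k y_k^2$, the Hermitian dual is $D^{\perp_H}=\{x : \langle x,y\rangle_H=0\ \forall y\in D\}$ and $D$ is Hermitian self-dual if $D=D^{\perp_H}$. The weight of a vector is the number of its nonzero coordinates. A quaternary Hermitian self-dual code of length $n$ is near-extremal if its minimum (nonzero) weight equals $2\lfloor n/6\rfloor$; for length $6m$ this is $2m$. *)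

theory Defs
  imports Main
begin

text \<open>The field F_4 = {0, 1, w, w^2} with w^2 = w + 1 (characteristic 2).\<close>

datatype f4 = F0 | F1 | FW | FW2

fun f4_add :: "f4 \<Rightarrow> f4 \<Rightarrow> f4" where
  "f4_add F0 y = y"
| "f4_add x F0 = x"
| "f4_add F1 F1 = F0"
| "f4_add F1 FW = FW2"
| "f4_add F1 FW2 = FW"
| "f4_add FW F1 = FW2"
| "f4_add FW FW = F0"
| "f4_add FW FW2 = F1"
| "f4_add FW2 F1 = FW"
| "f4_add FW2 FW = F1"
| "f4_add FW2 FW2 = F0"

fun f4_mul :: "f4 \<Rightarrow> f4 \<Rightarrow> f4" where
  "f4_mul F0 y = F0"
| "f4_mul x F0 = F0"
| "f4_mul F1 y = y"
| "f4_mul x F1 = x"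
| "f4_mul FW FW = FW2"
| "f4_mul FW FW2 = F1"
| "f4_mul FW2 FW = F1"
| "f4_mul FW2 FW2 = FW"

definition f4_conj :: "f4 \<Rightarrow> f4" where
  "f4_conj x = f4_mul x x"

definition vecs :: "nat \<Rightarrow> (nat \<Rightarrow> f4) set" where
  "vecs n = {x. \<forall>k\<ge>n. x k = F0}"

definition vadd :: "(nat \<Rightarrow> f4) \<Rightarrow> (nat \<Rightarrow> f4) \<Rightarrow> nat \<Rightarrow> f4" where
  "vadd x y = (\<lambda>k. f4_add (x k) (y k))"

definition vscale :: "f4 \<Rightarrow> (nat \<Rightarrow> f4) \<Rightarrow> nat \<Rightarrow> f4" where
  "vscale a x = (\<lambda>k. f4_mul a (x k))"

definition linear_code :: "nat \<Rightarrow> (nat \<Rightarrow> f4) set \<Rightarrow> bool" where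
  "linear_code n D \<longleftrightarrow> D \<subseteq> vecs n \<and> (\<lambda>k. F0) \<in> D
     \<and> (\<forall>x\<in>D. \<forall>y\<in>D. vadd x y \<in> D) \<and> (\<forall>a. \<forall>x\<in>D. vscale a x \<in> D)"

definition herm :: "nat \<Rightarrow> (nat \<Rightarrow> f4) \<Rightarrow> (nat \<Rightarrow> f4) \<Rightarrow> f4" where
  "herm n x y = foldr (\<lambda>k acc. f4_add (f4_mul (x k) (f4_conj (y k))) acc) [0..<n] F0"

definition herm_dual :: "nat \<Rightarrow> (nat \<Rightarrow> f4) set \<Rightarrow> (nat \<Rightarrow> f4) set" where
  "herm_dual n D = {x \<in> vecs n. \<forall>y\<in>D. herm n x y = F0}"

definition herm_self_dual :: "nat \<Rightarrow> (nat \<Rightarrow> f4) set \<Rightarrow> bool" where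
  "herm_self_dual n D \<longleftrightarrow> linear_code n D \<and> D = herm_dual n D"

definition wt :: "nat \<Rightarrow> (nat \<Rightarrow> f4) \<Rightarrow> nat" where
  "wt n x = card {k \<in> {0..<n}. x k \<noteq> F0}"

definition min_weight :: "nat \<Rightarrow> (nat \<Rightarrow> f4) set \<Rightarrow> nat" where
  "min_weight n D = Min (wt n ` (D - {\<lambda>k. F0}))"

definition near_extremal :: "nat \<Rightarrow> (nat \<Rightarrow> f4) set \<Rightarrow> bool" where
  "near_extremal n D \<longleftrightarrow> herm_self_dual n D \<and> D - {\<lambda>k. F0} \<noteq> {}
     \<and> min_weight n D = 2 * (n div 6)"

end

theory Submission
  imports Defs "HOL-Library.FuncSet" "HOL-Computational_Algebra.Polynomial"
begin

text \<open>
  For a coordinate \<open>i\<close>, Poisson summation with the additive character of F_4 expresses \<open>|D|\<close>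
  times the weight enumerator of the code shortened at \<open>i\<close> through the enumerator of the code
  punctured at \<open>i\<close>, and the latter differs from the enumerator of \<open>D\<close> only by the shortened part.
  Hence the difference \<open>e\<close> of the shortened enumerators at two coordinates satisfies
  \<open>|D| (1 - z) e(z) + 4 z f(z) = 0\<close>, where \<open>f\<close> is the MacWilliams transform of \<open>e\<close>.

  For a near-extremal code of length \<open>6m\<close> all weights are even and nonzero weights are at least
  \<open>2m\<close>. So \<open>e\<close> is even, vanishes to order \<open>2m\<close> at 0 and to order \<open>2m - 1\<close> at \<open>\<plusminus>1\<close>, has
  degree below \<open>6m\<close>, and vanishes at \<open>\<plusminus>1/3\<close> (\<open>1/3\<close> being the fixed point of the MacWilliams
  substitution): too many roots, so \<open>e = 0\<close>. Thus the number \<open>N\<close> of minimum weight words that are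
  nonzero at a given coordinate does not depend on the coordinate, and double counting gives
  \<open>6m N = 2m A\<^sub>2\<^sub>m\<close>, i.e. \<open>A\<^sub>2\<^sub>m = 3 N\<close>. Finally \<open>3\<close> divides \<open>N\<close>, since the three nonzero
  scalars act freely on the minimum weight words with nonzero first entry.
\<close>

section \<open>Arithmetic of F_4 and the Hermitian form\<close>

lemma f4_UNIV: "(UNIV :: f4 set) = {F0, F1, FW, FW2}"
  by (auto intro: f4.exhaust)

lemma card_f4_UNIV: "card (UNIV :: f4 set) = 4"
  by (simp add: f4_UNIV)

lemma f4_add_commute: "f4_add x y = f4_add y x"
  by (cases x; cases y; simp)

lemma f4_add_assoc: "f4_add (f4_add x y) z = f4_add x (f4_add y z)"
  by (cases x; cases y; cases z; simp)

lemma f4_add_F0_right [simp]: "f4_add x F0 = x"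
  by (cases x; simp)

lemma f4_add_add_cancel [simp]: "f4_add (f4_add x y) y = x"
  by (cases x; cases y; simp)

lemma f4_mul_F0_right [simp]: "f4_mul x F0 = F0"
  by (cases x; simp)

lemma f4_mul_F1_left [simp]: "f4_mul F1 x = x"
  by (cases x; simp)

lemma f4_mul_F1_right [simp]: "f4_mul x F1 = x"
  by (cases x; simp)

lemma f4_mul_commute: "f4_mul x y = f4_mul y x"
  by (cases x; cases y; simp)

lemma f4_mul_assoc: "f4_mul (f4_mul x y) z = f4_mul x (f4_mul y z)"
  by (cases x; cases y; cases z; simp)

lemma f4_distrib_left: "f4_mul a (f4_add x y) = f4_add (f4_mul a x) (f4_mul a y)"
  by (cases a; cases x; cases y; simp)

lemma f4_mul_eq_F0_iff [simp]: "f4_mul x y = F0 \<longleftrightarrow> x = F0 \<or> y = F0"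
  by (cases x; cases y; simp)

lemma f4_conj_add: "f4_conj (f4_add x y) = f4_add (f4_conj x) (f4_conj y)"
  by (cases x; cases y; simp add: f4_conj_def)

lemma f4_conj_mul: "f4_conj (f4_mul x y) = f4_mul (f4_conj x) (f4_conj y)"
  by (cases x; cases y; simp add: f4_conj_def)

lemma f4_conj_eq_F0_iff [simp]: "f4_conj x = F0 \<longleftrightarrow> x = F0"
  by (cases x; simp add: f4_conj_def)

lemma f4_norm: "f4_mul x (f4_conj x) = (if x = F0 then F0 else F1)"
  by (cases x; simp add: f4_conj_def)

lemma ex_f4_mul_eq_FW: "b \<noteq> F0 \<Longrightarrow> \<exists>a. f4_mul a b = FW"
  by (cases b) (auto intro: exI[of _ FW] exI[of _ F1] exI[of _ FW2])

lemma ex_f4_conj_mul_eq_FW: "b \<noteq> F0 \<Longrightarrow> \<exists>a. f4_mul (f4_conj a) b = FW"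
  by (cases b) (auto simp: f4_conj_def intro: exI[of _ FW] exI[of _ F1] exI[of _ FW2])

definition f4_sum :: "(nat \<Rightarrow> f4) \<Rightarrow> nat list \<Rightarrow> f4" where
  "f4_sum f ks = foldr (\<lambda>k acc. f4_add (f k) acc) ks F0"

lemma f4_sum_Nil [simp]: "f4_sum f [] = F0"
  by (simp add: f4_sum_def)

lemma f4_sum_Cons [simp]: "f4_sum f (k # ks) = f4_add (f k) (f4_sum f ks)"
  by (simp add: f4_sum_def)

lemma f4_sum_add: "f4_sum (\<lambda>k. f4_add (f k) (g k)) ks = f4_add (f4_sum f ks) (f4_sum g ks)"
  by (induction ks) (simp_all, metis f4_add_assoc f4_add_commute)

lemma f4_sum_scale: "f4_sum (\<lambda>k. f4_mul a (f k)) ks = f4_mul a (f4_sum f ks)"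
  by (induction ks) (simp_all add: f4_distrib_left)

lemma f4_sum_eq_F0: "(\<And>k. k \<in> set ks \<Longrightarrow> f k = F0) \<Longrightarrow> f4_sum f ks = F0"
  by (induction ks) auto

lemma f4_sum_single:
  assumes "distinct ks" "k0 \<in> set ks" "\<And>k. k \<in> set ks \<Longrightarrow> k \<noteq> k0 \<Longrightarrow> f k = F0"
  shows "f4_sum f ks = f k0"
  using assms
proof (induction ks)
  case (Cons k ks)
  show ?case
  proof (cases "k = k0")
    case True
    with Cons.prems have "f4_sum f ks = F0" by (intro f4_sum_eq_F0) auto
    with True show ?thesis by simp
  next
    case False
    with Cons show ?thesis by (simp add: f4_add_commute)
  qed
qed simp

lemma f4_sum_norm:
  "distinct ks \<Longrightarrow> f4_sum (\<lambda>k. f4_mul (x k) (f4_conj (x k))) ks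
     = (if odd (card {k \<in> set ks. x k \<noteq> F0}) then F1 else F0)"
proof (induction ks)
  case (Cons k ks)
  have "card {j \<in> set (k # ks). x j \<noteq> F0}
      = (if x k = F0 then card {j \<in> set ks. x j \<noteq> F0} else Suc (card {j \<in> set ks. x j \<noteq> F0}))"
  proof (cases "x k = F0")
    case False
    then have "{j \<in> set (k # ks). x j \<noteq> F0} = insert k {j \<in> set ks. x j \<noteq> F0}" by auto
    with Cons.prems False show ?thesis by simp
  qed (auto intro: arg_cong[where f = card])
  with Cons show ?case by (cases "x k = F0") (auto simp: f4_norm)
qed simp

lemma herm_eq_f4_sum: "herm n x y = f4_sum (\<lambda>k. f4_mul (x k) (f4_conj (y k))) [0..<n]"
  by (simp add: herm_def f4_sum_def)

lemma herm_vadd_left: "herm n (vadd x x') y = f4_add (herm n x y) (herm n x' y)"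
  unfolding herm_eq_f4_sum vadd_def
  by (simp add: f4_mul_commute[of _ "f4_conj _"] f4_distrib_left f4_sum_add)

lemma herm_vadd_right: "herm n y (vadd x x') = f4_add (herm n y x) (herm n y x')"
  unfolding herm_eq_f4_sum vadd_def by (simp add: f4_conj_add f4_distrib_left f4_sum_add)

lemma herm_vscale_right: "herm n y (vscale a x) = f4_mul (f4_conj a) (herm n y x)"
proof -
  have "f4_mul (y k) (f4_conj (f4_mul a (x k))) = f4_mul (f4_conj a) (f4_mul (y k) (f4_conj (x k)))"
    for k by (metis f4_conj_mul f4_mul_assoc f4_mul_commute)
  then show ?thesis unfolding herm_eq_f4_sum vscale_def by (simp add: f4_sum_scale)
qed

lemma herm_unit_left:
  "k0 < n \<Longrightarrow> herm n (\<lambda>k. if k = k0 then a else F0) x = f4_mul a (f4_conj (x k0))"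
  unfolding herm_eq_f4_sum by (subst f4_sum_single[of "[0..<n]" k0]) auto

lemma herm_disjoint: "(\<And>k. k < n \<Longrightarrow> y k = F0 \<or> x k = F0) \<Longrightarrow> herm n y x = F0"
  unfolding herm_eq_f4_sum by (rule f4_sum_eq_F0) auto

lemma herm_self: "herm n x x = (if odd (wt n x) then F1 else F0)"
  unfolding herm_eq_f4_sum wt_def by (simp add: f4_sum_norm)

lemma vadd_vadd_cancel: "vadd (vadd x z) z = x"
  by (simp add: vadd_def)

section \<open>Poisson summation for Hermitian self-dual codes\<close>

definition supported_on :: "nat set \<Rightarrow> (nat \<Rightarrow> f4) set" where
  "supported_on I = {y. \<forall>k. k \<notin> I \<longrightarrow> y k = F0}"

lemma vecs_eq_supported_on: "vecs n = supported_on {0..<n}"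
  by (auto simp: vecs_def supported_on_def)

lemma bij_betw_restrict_supported_on:
  "bij_betw (\<lambda>y. restrict y I) (supported_on I) (PiE I (\<lambda>_. UNIV))"
  by (rule bij_betw_byWitness[where f' = "\<lambda>f k. if k \<in> I then f k else F0"])
    (auto simp: supported_on_def fun_eq_iff PiE_def extensional_def)

lemma finite_supported_on: "finite I \<Longrightarrow> finite (supported_on I)"
  using bij_betw_finite[OF bij_betw_restrict_supported_on] by (simp add: finite_PiE f4_UNIV)

lemma card_supported_on: "finite I \<Longrightarrow> card (supported_on I) = 4 ^ card I"
  using bij_betw_same_card[OF bij_betw_restrict_supported_on] by (simp add: card_PiE card_f4_UNIV)

lemma linear_code_finite: "linear_code n D \<Longrightarrow> finite D"
  unfolding linear_code_def vecs_eq_supported_on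
  using finite_subset finite_supported_on[of "{0..<n}"] by blast

lemma herm_self_dual_finite: "herm_self_dual n D \<Longrightarrow> finite D"
  by (auto simp: herm_self_dual_def intro: linear_code_finite)

definition trace_char :: "f4 \<Rightarrow> int" where
  "trace_char a = (if f4_add a (f4_conj a) = F0 then 1 else -1)"

lemma trace_char_F0 [simp]: "trace_char F0 = 1"
  by (simp add: trace_char_def f4_conj_def)

lemma trace_char_add_FW: "trace_char (f4_add b FW) = - trace_char b"
  by (cases b; simp add: trace_char_def f4_conj_def)

lemma sum_eq_0_by_sign_reversing_involution:
  fixes f :: "'a \<Rightarrow> int"
  assumes "\<And>x. x \<in> S \<Longrightarrow> \<sigma> x \<in> S" "\<And>x. x \<in> S \<Longrightarrow> \<sigma> (\<sigma> x) = x"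
    and "\<And>x. x \<in> S \<Longrightarrow> f (\<sigma> x) = - f x"
  shows "sum f S = 0"
proof -
  have "sum f S = sum (\<lambda>x. f (\<sigma> x)) S"
    by (rule sum.reindex_bij_witness[where i = \<sigma> and j = \<sigma>]) (use assms in auto)
  also have "\<dots> = - sum f S"
    using assms(3) by (simp add: sum_negf)
  finally show ?thesis by simp
qed

lemma sum_trace_char_herm_code:
  assumes lin: "linear_code n D" and self_dual: "D = herm_dual n D" and y: "y \<in> vecs n"
  shows "(\<Sum>x\<in>D. trace_char (herm n y x)) = (if y \<in> D then int (card D) else 0)"
proof (cases "y \<in> D")
  case True
  with self_dual have "herm n y x = F0" if "x \<in> D" for x
    using that by (auto simp: herm_dual_def)
  with True show ?thesis by simp
next
  case False
  with self_dual y obtain x0 where x0: "x0 \<in> D" "herm n y x0 \<noteq> F0"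
    by (auto simp: herm_dual_def)
  obtain a where a: "f4_mul (f4_conj a) (herm n y x0) = FW"
    using ex_f4_conj_mul_eq_FW[OF x0(2)] by blast
  have "(\<Sum>x\<in>D. trace_char (herm n y x)) = 0"
    by (rule sum_eq_0_by_sign_reversing_involution[where \<sigma> = "\<lambda>x. vadd x (vscale a x0)"])
      (use lin x0(1) in \<open>auto simp: linear_code_def vadd_vadd_cancel herm_vadd_right
        herm_vscale_right a trace_char_add_FW\<close>)
  with False show ?thesis by simp
qed

lemma sum_trace_char_herm_supported_on:
  assumes I: "I \<subseteq> {0..<n}"
  shows "(\<Sum>y\<in>supported_on I. trace_char (herm n y x))
    = (if \<forall>k\<in>I. x k = F0 then 4 ^ card I else 0)"
proof (cases "\<forall>k\<in>I. x k = F0")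
  case True
  then have "herm n y x = F0" if "y \<in> supported_on I" for y
    using that by (auto simp: supported_on_def intro!: herm_disjoint)
  with True I show ?thesis by (simp add: card_supported_on finite_subset)
next
  case False
  then obtain k0 where k0: "k0 \<in> I" "x k0 \<noteq> F0" by blast
  with I have "k0 < n" by auto
  obtain a where a: "f4_mul a (f4_conj (x k0)) = FW"
    using ex_f4_mul_eq_FW[of "f4_conj (x k0)"] k0 by auto
  let ?e = "\<lambda>k. if k = k0 then a else F0"
  have "(\<Sum>y\<in>supported_on I. trace_char (herm n y x)) = 0"
  proof (rule sum_eq_0_by_sign_reversing_involution[where \<sigma> = "\<lambda>y. vadd y ?e"])
    show "vadd y ?e \<in> supported_on I" if "y \<in> supported_on I" for y
      using that k0 by (auto simp: supported_on_def vadd_def)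
    show "vadd (vadd y ?e) ?e = y" for y
      by (rule vadd_vadd_cancel)
    show "trace_char (herm n (vadd y ?e) x) = - trace_char (herm n y x)" for y
      by (simp only: herm_vadd_left herm_unit_left[OF \<open>k0 < n\<close>] a trace_char_add_FW)
  qed
  with False show ?thesis by simp
qed

text \<open>Poisson summation: the character sum of the Hermitian form over
  \<open>supported_on I \<times> D\<close> is evaluated in both orders.\<close>
lemma card_subcode_duality:
  assumes "herm_self_dual n D" and I: "I \<subseteq> {0..<n}"
  shows "card D * card (D \<inter> supported_on I) = 4 ^ card I * card (D \<inter> supported_on ({0..<n} - I))"
proof -
  have lin: "linear_code n D" and self_dual: "D = herm_dual n D"
    using assms(1) by (simp_all add: herm_self_dual_def)
  have finite_I: "finite I" using I finite_subset by blast
  have D_vecs: "D \<subseteq> vecs n" using lin by (simp add: linear_code_def)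
  have "int (card D) * int (card (D \<inter> supported_on I))
      = (\<Sum>y\<in>supported_on I. if y \<in> D then int (card D) else 0)"
    by (simp add: sum.If_cases finite_supported_on[OF finite_I] Int_commute)
  also have "\<dots> = (\<Sum>y\<in>supported_on I. \<Sum>x\<in>D. trace_char (herm n y x))"
    using I by (intro sum.cong refl sum_trace_char_herm_code[OF lin self_dual, symmetric])
      (auto simp: vecs_eq_supported_on supported_on_def)
  also have "\<dots> = (\<Sum>x\<in>D. \<Sum>y\<in>supported_on I. trace_char (herm n y x))"
    by (rule sum.swap)
  also have "\<dots> = (\<Sum>x\<in>D. if \<forall>k\<in>I. x k = F0 then 4 ^ card I else 0)"
    by (intro sum.cong refl sum_trace_char_herm_supported_on[OF I])
  also have "\<dots> = 4 ^ card I * int (card {x\<in>D. \<forall>k\<in>I. x k = F0})"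
    using linear_code_finite[OF lin] by (simp add: sum.If_cases Int_def conj_commute)
  also have "{x\<in>D. \<forall>k\<in>I. x k = F0} = D \<inter> supported_on ({0..<n} - I)"
    using D_vecs by (auto simp: vecs_def supported_on_def)
  finally have "int (card D * card (D \<inter> supported_on I))
      = int (4 ^ card I * card (D \<inter> supported_on ({0..<n} - I)))"
    by simp
  then show ?thesis
    by (simp only: of_nat_eq_iff)
qed

section \<open>Weight enumerators of shortened and punctured codes\<close>

lemma sum_Pow_binomial:
  fixes a b :: "'a :: comm_semiring_1"
  assumes "finite A"
  shows "(\<Sum>K\<in>Pow A. a ^ card K * b ^ (card A - card K)) = (a + b) ^ card A"
proof -
  have "(a + b) ^ card A = (\<Sum>K\<in>Pow A. (\<Prod>x\<in>K. a) * (\<Prod>x\<in>A - K. b))"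
    using prod_add[OF assms, of "\<lambda>_. a" "\<lambda>_. b"] by simp
  also have "\<dots> = (\<Sum>K\<in>Pow A. a ^ card K * b ^ (card A - card K))"
    using assms by (intro sum.cong refl) (auto simp: card_Diff_subset finite_subset)
  finally show ?thesis by simp
qed

lemma sum_Pow_superset_binomial:
  fixes a b :: "'a :: comm_semiring_1"
  assumes A: "finite A" and S: "S \<subseteq> A"
  shows "(\<Sum>I\<in>{I\<in>Pow A. S \<subseteq> I}. a ^ card I * b ^ (card A - card I))
    = a ^ card S * (a + b) ^ (card A - card S)"
proof -
  have finite_S: "finite S" using A S finite_subset by blast
  have card_A_S: "card (A - S) = card A - card S" using S finite_S by (simp add: card_Diff_subset)
  have "bij_betw (\<lambda>K. S \<union> K) (Pow (A - S)) {I\<in>Pow A. S \<subseteq> I}"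
    by (rule bij_betw_byWitness[where f' = "\<lambda>I. I - S"]) (use S in auto)
  then have "(\<Sum>I\<in>{I\<in>Pow A. S \<subseteq> I}. a ^ card I * b ^ (card A - card I))
      = (\<Sum>K\<in>Pow (A - S). a ^ card (S \<union> K) * b ^ (card A - card (S \<union> K)))"
    by (rule sum.reindex_bij_betw[symmetric])
  also have "\<dots> = (\<Sum>K\<in>Pow (A - S). a ^ card S * (a ^ card K * b ^ (card (A - S) - card K)))"
  proof (intro sum.cong refl)
    fix K assume K: "K \<in> Pow (A - S)"
    then have "card (S \<union> K) = card S + card K"
      using A finite_S by (subst card_Un_disjoint) (auto intro: finite_subset)
    then show "a ^ card (S \<union> K) * b ^ (card A - card (S \<union> K))
        = a ^ card S * (a ^ card K * b ^ (card (A - S) - card K))"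
      by (simp add: card_A_S power_add mult.assoc)
  qed
  also have "\<dots> = a ^ card S * (a + b) ^ card (A - S)"
    by (simp only: sum_distrib_left[symmetric] sum_Pow_binomial[OF finite_Diff[OF A]])
  finally show ?thesis
    by (simp only: card_A_S)
qed

lemma sum_Pow_card_superset:
  fixes s t :: "'a :: comm_semiring_1"
  assumes A: "finite A" and D: "finite D" and T: "\<And>c. c \<in> D \<Longrightarrow> T c \<subseteq> A"
  shows "(\<Sum>I\<in>Pow A. of_nat (card {c\<in>D. T c \<subseteq> I}) * (s ^ card I * t ^ (card A - card I)))
    = (\<Sum>c\<in>D. s ^ card (T c) * (s + t) ^ (card A - card (T c)))"
proof -
  have "(\<Sum>I\<in>Pow A. of_nat (card {c\<in>D. T c \<subseteq> I}) * (s ^ card I * t ^ (card A - card I)))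
      = (\<Sum>I\<in>Pow A. \<Sum>c\<in>D. if T c \<subseteq> I then s ^ card I * t ^ (card A - card I) else 0)"
    using D by (simp add: sum.If_cases Int_def conj_commute)
  also have "\<dots> = (\<Sum>c\<in>D. \<Sum>I\<in>{I\<in>Pow A. T c \<subseteq> I}. s ^ card I * t ^ (card A - card I))"
    using A by (subst sum.swap) (simp add: sum.If_cases Int_def conj_commute)
  also have "\<dots> = (\<Sum>c\<in>D. s ^ card (T c) * (s + t) ^ (card A - card (T c)))"
    using A T by (intro sum.cong refl sum_Pow_superset_binomial)
  finally show ?thesis .
qed

definition support :: "nat \<Rightarrow> (nat \<Rightarrow> f4) \<Rightarrow> nat set" where
  "support n c = {k\<in>{0..<n}. c k \<noteq> F0}"

lemma wt_eq_card_support: "wt n c = card (support n c)"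
  by (simp add: wt_def support_def)

lemma supported_on_iff_support_subset:
  "c \<in> vecs n \<Longrightarrow> c \<in> supported_on I \<longleftrightarrow> support n c \<subseteq> I"
  unfolding vecs_def supported_on_def support_def by (auto simp: subset_iff) (metis not_le)

lemma wt_le_length: "wt n c \<le> n"
  unfolding wt_eq_card_support support_def by (rule order.trans[OF card_mono[of "{0..<n}"]]) auto

lemma wt_less_length: "i < n \<Longrightarrow> c i = F0 \<Longrightarrow> wt n c < n"
  unfolding wt_eq_card_support support_def
  by (rule le_less_trans[OF card_mono[of "{0..<n} - {i}"]]) auto

text \<open>The homogeneous weight enumerator \<open>W(x, y)\<close> of the code shortened at \<open>i\<close> (of length
  \<open>n - 1\<close>), taken at \<open>x = s\<close>, \<open>y = s + t\<close>.\<close>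
definition shortened_enum :: "(nat \<Rightarrow> f4) set \<Rightarrow> nat \<Rightarrow> nat \<Rightarrow> real \<Rightarrow> real \<Rightarrow> real" where
  "shortened_enum D n i s t = (\<Sum>c\<in>{c\<in>D. c i = F0}. s ^ wt n c * (s + t) ^ (n - 1 - wt n c))"

lemma shortened_enum_eq_subcode_sum:
  assumes lin: "linear_code n D" and i: "i < n"
  shows "shortened_enum D n i s t = (\<Sum>I\<in>Pow ({0..<n} - {i}).
    real (card (D \<inter> supported_on I)) * (s ^ card I * t ^ (n - 1 - card I)))"
proof -
  let ?A = "{0..<n} - {i}"
  let ?D = "{c\<in>D. c i = F0}"
  have supported_iff: "c \<in> supported_on I \<longleftrightarrow> support n c \<subseteq> I" if "c \<in> D" for c I
    using lin that by (auto simp: linear_code_def intro!: supported_on_iff_support_subset)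
  have support_A: "support n c \<subseteq> ?A \<longleftrightarrow> c i = F0" for c
    using i by (auto simp: support_def)
  have "D \<inter> supported_on I = {c\<in>?D. support n c \<subseteq> I}" if "I \<subseteq> ?A" for I
    using that support_A supported_iff by blast
  then have "(\<Sum>I\<in>Pow ?A. real (card (D \<inter> supported_on I)) * (s ^ card I * t ^ (n - 1 - card I)))
      = (\<Sum>I\<in>Pow ?A. of_nat (card {c\<in>?D. support n c \<subseteq> I}) * (s ^ card I * t ^ (card ?A - card I)))"
    using i by (intro sum.cong refl) auto
  also have "\<dots> = shortened_enum D n i s t"
    using i support_A linear_code_finite[OF lin]
    by (subst sum_Pow_card_superset) (auto simp: shortened_enum_def wt_eq_card_support)
  finally show ?thesis by simp
qed

text \<open>The MacWilliams step: duality turns the subcode sum for the shortened code into the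
  weight enumerator of the code punctured at \<open>i\<close>.\<close>
lemma card_mult_shortened_enum:
  assumes sd: "herm_self_dual n D" and i: "i < n"
  shows "card D * shortened_enum D n i s t = (\<Sum>c\<in>D.
    t ^ card (support n c - {i}) * (t + 4 * s) ^ (n - 1 - card (support n c - {i})))"
proof -
  let ?A = "{0..<n} - {i}"
  have lin: "linear_code n D" and self_dual: "D = herm_dual n D"
    using sd by (simp_all add: herm_self_dual_def)
  have supported_iff: "c \<in> supported_on I \<longleftrightarrow> support n c \<subseteq> I" if "c \<in> D" for c I
    using lin that by (auto simp: linear_code_def intro!: supported_on_iff_support_subset)
  have card_A: "card ?A = n - 1" using i by simp
  have "card D * shortened_enum D n i s t = (\<Sum>I\<in>Pow ?A.
      real (card D * card (D \<inter> supported_on I)) * (s ^ card I * t ^ (card ?A - card I)))"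
    by (simp add: shortened_enum_eq_subcode_sum[OF lin i] sum_distrib_left card_A mult.assoc)
  also have "\<dots> = (\<Sum>I\<in>Pow ?A.
      real (card (D \<inter> supported_on (insert i (?A - I)))) * ((4 * s) ^ card I * t ^ (card ?A - card I)))"
  proof (intro sum.cong refl)
    fix I assume I: "I \<in> Pow ?A"
    then have "{0..<n} - I = insert i (?A - I)" using i by auto
    with card_subcode_duality[OF sd, of I] I have
      "card D * card (D \<inter> supported_on I) = 4 ^ card I * card (D \<inter> supported_on (insert i (?A - I)))"
      by auto
    then show "real (card D * card (D \<inter> supported_on I)) * (s ^ card I * t ^ (card ?A - card I))
        = real (card (D \<inter> supported_on (insert i (?A - I)))) * ((4 * s) ^ card I * t ^ (card ?A - card I))"
      by (simp add: power_mult_distrib mult_ac)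
  qed
  also have "\<dots> = (\<Sum>J\<in>Pow ?A.
      real (card {c\<in>D. support n c - {i} \<subseteq> J}) * (t ^ card J * (4 * s) ^ (card ?A - card J)))"
  proof (rule sum.reindex_bij_witness[where i = "\<lambda>J. ?A - J" and j = "\<lambda>J. ?A - J"])
    fix I assume I: "I \<in> Pow ?A"
    have "D \<inter> supported_on (insert i (?A - I)) = {c\<in>D. support n c - {i} \<subseteq> ?A - I}"
      by (auto simp: supported_iff support_def)
    moreover have "card (?A - I) = card ?A - card I" "card ?A - (card ?A - card I) = card I"
      using I by (auto simp: card_Diff_subset finite_subset card_mono diff_diff_cancel)
    ultimately show "real (card {c\<in>D. support n c - {i} \<subseteq> ?A - I})
        * (t ^ card (?A - I) * (4 * s) ^ (card ?A - card (?A - I)))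
      = real (card (D \<inter> supported_on (insert i (?A - I)))) * ((4 * s) ^ card I * t ^ (card ?A - card I))"
      by (simp add: mult_ac)
  qed auto
  also have "\<dots> = (\<Sum>c\<in>D.
      t ^ card (support n c - {i}) * (t + 4 * s) ^ (n - 1 - card (support n c - {i})))"
    using linear_code_finite[OF lin] by (subst sum_Pow_card_superset) (auto simp: card_A support_def)
  finally show ?thesis .
qed

lemma shortened_enum_identity:
  fixes s t :: real
  assumes sd: "herm_self_dual n D" and i: "i < n"
  shows "real (card D) * t * shortened_enum D n i s t + 4 * s * shortened_enum D n i t (4 * s)
    = (\<Sum>c\<in>D. t ^ wt n c * (t + 4 * s) ^ (n - wt n c))"
proof -
  have finite_D: "finite D"
    using sd by (rule herm_self_dual_finite)
  have punctured_term: "t * (t ^ card (support n c - {i}) * (t + 4 * s) ^ (n - 1 - card (support n c - {i})))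
      = t ^ wt n c * (t + 4 * s) ^ (n - wt n c)
        - (if c i = F0 then 4 * s * (t ^ wt n c * (t + 4 * s) ^ (n - 1 - wt n c)) else 0)" for c
  proof (cases "c i = F0")
    case True
    then have "support n c - {i} = support n c" by (auto simp: support_def)
    moreover have "n - wt n c = Suc (n - 1 - wt n c)"
      using wt_less_length[of i n c] True i by linarith
    ultimately show ?thesis
      using True by (simp add: wt_eq_card_support algebra_simps)
  next
    case False
    define k where "k = card (support n c - {i})"
    have "i \<in> support n c" using False i by (simp add: support_def)
    then have wt_c: "wt n c = Suc k"
      unfolding k_def wt_eq_card_support by (rule card.remove[rotated]) (simp add: support_def)
    then have n_k: "n - 1 - k = n - wt n c"
      using wt_le_length[of n c] by linarith
    show ?thesis
      unfolding k_def[symmetric] using False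
      by (simp only: n_k wt_c power_Suc mult.assoc if_False diff_zero)
  qed
  have "real (card D) * t * shortened_enum D n i s t = (\<Sum>c\<in>D.
      t * (t ^ card (support n c - {i}) * (t + 4 * s) ^ (n - 1 - card (support n c - {i}))))"
    by (simp add: card_mult_shortened_enum[OF sd i] sum_distrib_left mult_ac)
  also have "\<dots> = (\<Sum>c\<in>D. t ^ wt n c * (t + 4 * s) ^ (n - wt n c))
      - (\<Sum>c\<in>D. if c i = F0 then 4 * s * (t ^ wt n c * (t + 4 * s) ^ (n - 1 - wt n c)) else 0)"
    by (simp only: punctured_term sum_subtractf)
  also have "(\<Sum>c\<in>D. if c i = F0 then 4 * s * (t ^ wt n c * (t + 4 * s) ^ (n - 1 - wt n c)) else 0)
      = 4 * s * shortened_enum D n i t (4 * s)"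
    using finite_D by (simp add: shortened_enum_def sum_distrib_left sum.If_cases Int_def conj_commute)
  finally show ?thesis by simp
qed

section \<open>Real polynomials with many roots\<close>

lemma sum_order_le_degree_finite:
  fixes p :: "real poly"
  assumes "p \<noteq> 0" "finite Z"
  shows "(\<Sum>x\<in>Z. order x p) \<le> degree p"
proof -
  have "(\<Sum>x\<in>Z. order x p) = (\<Sum>x\<in>Z \<inter> {x. poly p x = 0}. order x p)"
    using assms by (intro sum.mono_neutral_right) (auto simp: order_root)
  also have "\<dots> \<le> (\<Sum>x | poly p x = 0. order x p)"
    using poly_roots_finite[OF assms(1)] by (intro sum_mono2) auto
  also have "\<dots> \<le> degree p"
    by (rule sum_order_le_degree[OF assms(1)])
  finally show ?thesis .
qed

lemma even_poly_reflect_dvd: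
  fixes e :: "real poly"
  assumes even: "\<And>z. poly e (-z) = poly e z" and "[:-c, 1:] ^ k dvd e"
  shows "[:c, 1:] ^ k dvd e"
proof -
  obtain q where q: "e = [:-c, 1:] ^ k * q" using assms(2) by (elim dvdE)
  have "poly e z = poly ([:c, 1:] ^ k * smult ((-1) ^ k) (pcompose q [:0, -1:])) z" for z
  proof -
    have "poly e z = (- c - z) ^ k * poly q (- z)"
      by (subst even[symmetric]) (simp add: q)
    also have "\<dots> = ((-1) * (z + c)) ^ k * poly q (- z)"
      by (simp add: algebra_simps)
    also have "\<dots> = (z + c) ^ k * ((-1) ^ k * poly q (- z))"
      by (simp only: power_mult_distrib mult_ac)
    finally show ?thesis by (simp add: poly_pcompose add.commute)
  qed
  then have "e = [:c, 1:] ^ k * smult ((-1) ^ k) (pcompose q [:0, -1:])"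
    by (simp add: poly_eq_poly_eq_iff[symmetric] fun_eq_iff)
  then show ?thesis by (rule dvdI)
qed

lemma even_poly_eq_0_by_root_count:
  fixes e :: "real poly"
  assumes even: "\<And>z. poly e (-z) = poly e z"
    and zero: "[:0, 1:] ^ a dvd e" and one: "[:-1, 1:] ^ b dvd e"
    and r: "poly e r = 0" "r \<notin> {0, 1, -1}"
    and deg: "degree e < a + 2 * b + 2"
  shows "e = 0"
proof (rule ccontr)
  assume "e \<noteq> 0"
  have minus_one: "[:1, 1:] ^ b dvd e"
    by (rule even_poly_reflect_dvd[OF even one])
  have "a \<le> order 0 e" "b \<le> order 1 e" "b \<le> order (-1) e"
    using zero one minus_one \<open>e \<noteq> 0\<close> order_divides[of 0 a e] order_divides[of 1 b e]
      order_divides[of "-1" b e] by simp_all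
  moreover have "1 \<le> order r e" "1 \<le> order (-r) e"
    using r even[of r] \<open>e \<noteq> 0\<close> order_root[of e r] order_root[of e "-r"] by auto
  moreover have "(\<Sum>x\<in>{0, 1, -1, r, -r}. order x e)
      = order 0 e + order 1 e + order (-1) e + order r e + order (-r) e"
    using r by auto
  moreover have "(\<Sum>x\<in>{0, 1, -1, r, -r}. order x e) \<le> degree e"
    by (rule sum_order_le_degree_finite[OF \<open>e \<noteq> 0\<close>]) simp
  ultimately show False
    using deg by linarith
qed

lemma dvd_of_linear_relation:
  fixes e f :: "real poly"
  assumes K: "K \<noteq> 0" and rel: "\<And>z. K * (1 - z) * poly e z + 4 * z * poly f z = 0"
    and "[:-1, 1:] ^ Suc k dvd f"
  shows "[:-1, 1:] ^ k dvd e"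
proof -
  have "poly ([:-1, 1:] * smult K e) z = poly ([:0, 4:] * f) z" for z
    using rel[of z] by (simp add: algebra_simps)
  then have "[:-1, 1:] * smult K e = [:0, 4:] * f"
    by (simp add: poly_eq_poly_eq_iff[symmetric] fun_eq_iff)
  moreover have "[:-1, 1:] ^ Suc k dvd [:0, 4:] * f"
    using assms(3) by (rule dvd_mult)
  ultimately have "[:-1, 1:] * [:-1, 1:] ^ k dvd [:-1, 1:] * smult K e"
    by (simp only: power_Suc)
  then have "[:-1, 1:] ^ k dvd smult K e"
    by (rule iffD1[OF dvd_times_left_cancel_iff, rotated]) simp
  then show ?thesis
    using K by (simp add: dvd_smult_iff)
qed

section \<open>Near-extremal codes\<close>

lemma herm_self_dual_even_wt:
  assumes "herm_self_dual n D" "c \<in> D"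
  shows "even (wt n c)"
proof -
  from assms have "herm n c c = F0"
    by (auto simp: herm_self_dual_def herm_dual_def)
  then show ?thesis by (simp add: herm_self split: if_splits)
qed

lemma near_extremal_wt_ge:
  assumes ne: "near_extremal n D" and c: "c \<in> D" "c \<noteq> (\<lambda>k. F0)"
  shows "2 * (n div 6) \<le> wt n c"
proof -
  have "finite D"
    using ne by (auto simp: near_extremal_def intro: herm_self_dual_finite)
  with c have "min_weight n D \<le> wt n c"
    by (auto simp: min_weight_def)
  with ne show ?thesis by (simp add: near_extremal_def)
qed

definition nonzero_shortened :: "(nat \<Rightarrow> f4) set \<Rightarrow> nat \<Rightarrow> (nat \<Rightarrow> f4) set" where
  "nonzero_shortened D i = {c\<in>D. c i = F0 \<and> c \<noteq> (\<lambda>k. F0)}"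

definition shortened_wt_poly :: "(nat \<Rightarrow> f4) set \<Rightarrow> nat \<Rightarrow> nat \<Rightarrow> real poly" where
  "shortened_wt_poly D n i = (\<Sum>c\<in>nonzero_shortened D i. monom 1 (wt n c))"

text \<open>The MacWilliams transform \<open>(1 + 3 z)\<^sup>n\<^sup>-\<^sup>1 P((1 - z) / (1 + 3 z))\<close> of
  \<open>P = shortened_wt_poly D n i\<close>.\<close>
definition shortened_dual_wt_poly :: "(nat \<Rightarrow> f4) set \<Rightarrow> nat \<Rightarrow> nat \<Rightarrow> real poly" where
  "shortened_dual_wt_poly D n i
    = (\<Sum>c\<in>nonzero_shortened D i. [:1, -1:] ^ wt n c * [:1, 3:] ^ (n - 1 - wt n c))"

lemma shortened_enum_eq_poly:
  assumes "linear_code n D"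
  shows "shortened_enum D n i z (1 - z) = 1 + poly (shortened_wt_poly D n i) z"
    and "shortened_enum D n i (1 - z) (4 * z)
      = (1 + 3 * z) ^ (n - 1) + poly (shortened_dual_wt_poly D n i) z"
proof -
  have "{c\<in>D. c i = F0} = insert (\<lambda>k. F0) (nonzero_shortened D i)"
    using assms by (auto simp: nonzero_shortened_def linear_code_def)
  moreover have "finite (nonzero_shortened D i)"
    using linear_code_finite[OF assms] by (simp add: nonzero_shortened_def)
  ultimately show "shortened_enum D n i z (1 - z) = 1 + poly (shortened_wt_poly D n i) z"
    and "shortened_enum D n i (1 - z) (4 * z)
      = (1 + 3 * z) ^ (n - 1) + poly (shortened_dual_wt_poly D n i) z"
    by (simp_all add: shortened_enum_def shortened_wt_poly_def shortened_dual_wt_poly_def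
      nonzero_shortened_def wt_def poly_sum poly_monom algebra_simps)
qed

text \<open>\<open>1/3\<close> is the fixed point of the MacWilliams substitution.\<close>
lemma poly_shortened_dual_wt_poly_third:
  assumes "i < n"
  shows "poly (shortened_dual_wt_poly D n i) (1/3) = 2 ^ (n - 1) * poly (shortened_wt_poly D n i) (1/3)"
  unfolding shortened_dual_wt_poly_def shortened_wt_poly_def poly_sum sum_distrib_left
proof (intro sum.cong refl)
  fix c assume "c \<in> nonzero_shortened D i"
  then have w: "wt n c \<le> n - 1"
    using assms wt_less_length[of i n c] by (auto simp: nonzero_shortened_def)
  have "(2::real) ^ (n - 1) = 2 ^ wt n c * 2 ^ (n - 1 - wt n c)"
    using w by (simp flip: power_add)
  moreover have "(1 - 1/3 :: real) ^ wt n c = 2 ^ wt n c * (1/3) ^ wt n c"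
    by (simp flip: power_mult_distrib)
  ultimately show "poly ([:1, -1:] ^ wt n c * [:1, 3:] ^ (n - 1 - wt n c)) (1/3)
      = 2 ^ (n - 1) * poly (monom 1 (wt n c)) (1/3 :: real)"
    by (simp add: poly_monom)
qed

lemma shortened_wt_poly_relation:
  assumes sd: "herm_self_dual n D" and i: "i < n" and j: "j < n"
  shows "real (card D) * (1 - z) * poly (shortened_wt_poly D n i - shortened_wt_poly D n j) z
    + 4 * z * poly (shortened_dual_wt_poly D n i - shortened_dual_wt_poly D n j) z = 0"
proof -
  have lin: "linear_code n D" using sd by (simp add: herm_self_dual_def)
  have "real (card D) * (1 - z) * shortened_enum D n i z (1 - z)
      + 4 * z * shortened_enum D n i (1 - z) (4 * z)
    = real (card D) * (1 - z) * shortened_enum D n j z (1 - z)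
      + 4 * z * shortened_enum D n j (1 - z) (4 * z)"
    by (simp add: shortened_enum_identity[OF sd i] shortened_enum_identity[OF sd j])
  then show ?thesis
    by (simp only: shortened_enum_eq_poly[OF lin]) (simp add: algebra_simps)
qed

lemma shortened_wt_poly_even:
  assumes "herm_self_dual n D"
  shows "poly (shortened_wt_poly D n i) (-z) = poly (shortened_wt_poly D n i) z"
  using herm_self_dual_even_wt[OF assms]
  by (simp add: shortened_wt_poly_def poly_sum poly_monom nonzero_shortened_def)

lemma degree_shortened_wt_poly:
  assumes "finite D" "i < n"
  shows "degree (shortened_wt_poly D n i) < n"
proof -
  have "degree (shortened_wt_poly D n i) \<le> n - 1"
    unfolding shortened_wt_poly_def using assms
    by (intro degree_sum_le) (auto simp: degree_monom_eq nonzero_shortened_def dest: wt_less_length)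
  with assms(2) show ?thesis by linarith
qed

lemma monom_dvd_shortened_wt_poly:
  "(\<And>c. c \<in> nonzero_shortened D i \<Longrightarrow> w \<le> wt n c) \<Longrightarrow> [:0, 1:] ^ w dvd shortened_wt_poly D n i"
  unfolding shortened_wt_poly_def
  by (intro dvd_sum) (auto simp: monom_altdef intro!: le_imp_power_dvd)

lemma dvd_shortened_dual_wt_poly:
  assumes "\<And>c. c \<in> nonzero_shortened D i \<Longrightarrow> w \<le> wt n c"
  shows "[:-1, 1:] ^ w dvd shortened_dual_wt_poly D n i"
proof -
  have "[:-1, 1:] dvd [:1, -1 :: real:]"
    by (rule dvdI[of _ _ "-1"]) simp
  then have "[:-1, 1:] ^ w dvd [:1, -1 :: real:] ^ wt n c" if "c \<in> nonzero_shortened D i" for c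
    using assms[OF that] by (metis dvd_power_le)
  then show ?thesis
    unfolding shortened_dual_wt_poly_def by (auto intro!: dvd_sum dvd_mult2)
qed

lemma shortened_wt_poly_indep:
  assumes m: "m > 0" and ne: "near_extremal (6 * m) D" and i: "i < 6 * m" and j: "j < 6 * m"
  shows "shortened_wt_poly D (6 * m) i = shortened_wt_poly D (6 * m) j"
proof -
  let ?n = "6 * m"
  define e where "e = shortened_wt_poly D ?n i - shortened_wt_poly D ?n j"
  define f where "f = shortened_dual_wt_poly D ?n i - shortened_dual_wt_poly D ?n j"
  have sd: "herm_self_dual ?n D" using ne by (simp add: near_extremal_def)
  have finite_D: "finite D" using sd by (rule herm_self_dual_finite)
  have "D \<noteq> {}" using ne by (auto simp: near_extremal_def)
  with finite_D have K: "real (card D) \<noteq> 0" by simp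
  have rel: "real (card D) * (1 - z) * poly e z + 4 * z * poly f z = 0" for z
    unfolding e_def f_def by (rule shortened_wt_poly_relation[OF sd i j])
  have wt_ge: "2 * m \<le> wt ?n c" if "c \<in> nonzero_shortened D k" for c k
    using near_extremal_wt_ge[OF ne] that by (auto simp: nonzero_shortened_def)
  have "[:0, 1:] ^ (2 * m) dvd e"
    unfolding e_def by (intro dvd_diff monom_dvd_shortened_wt_poly wt_ge)
  moreover have "[:-1, 1:] ^ Suc (2 * m - 1) dvd f"
    unfolding f_def using m by (auto intro!: dvd_diff dvd_shortened_dual_wt_poly wt_ge)
  then have "[:-1, 1:] ^ (2 * m - 1) dvd e"
    using K rel by (rule dvd_of_linear_relation[rotated 2])
  moreover have "poly e (-z) = poly e z" for z
    unfolding e_def by (simp add: shortened_wt_poly_even[OF sd])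
  moreover have "poly e (1/3) = 0"
  proof -
    have "poly f (1/3) = 2 ^ (?n - 1) * poly e (1/3)"
      using i j by (simp add: e_def f_def poly_shortened_dual_wt_poly_third algebra_simps)
    with rel[of "1/3"] have "(real (card D) * (2/3) + (4/3) * 2 ^ (?n - 1)) * poly e (1/3) = 0"
      by (simp add: algebra_simps)
    moreover have "real (card D) * (2/3) + (4/3) * 2 ^ (?n - 1) > 0"
      by (intro add_nonneg_pos) simp_all
    ultimately show ?thesis by simp
  qed
  moreover have "degree e < 2 * m + 2 * (2 * m - 1) + 2"
    unfolding e_def using degree_diff_le_max[of "shortened_wt_poly D ?n i" "shortened_wt_poly D ?n j"]
      degree_shortened_wt_poly[OF finite_D i] degree_shortened_wt_poly[OF finite_D j] m
    by linarith
  ultimately have "e = 0"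
    by (intro even_poly_eq_0_by_root_count[of e "2 * m" "2 * m - 1" "1/3"]) auto
  then show ?thesis by (simp add: e_def)
qed

lemma coeff_shortened_wt_poly:
  "finite D \<Longrightarrow> coeff (shortened_wt_poly D n i) k = card {c\<in>nonzero_shortened D i. wt n c = k}"
  unfolding shortened_wt_poly_def coeff_sum coeff_monom
  by (simp add: sum.If_cases nonzero_shortened_def Int_def conj_commute)

lemma card_min_wt_coord_nonzero_indep:
  assumes m: "m > 0" and ne: "near_extremal (6 * m) D" and i: "i < 6 * m"
  shows "card {x\<in>D. wt (6 * m) x = 2 * m \<and> x i \<noteq> F0}
    = card {x\<in>D. wt (6 * m) x = 2 * m \<and> x 0 \<noteq> F0}"
proof -
  have finite_D: "finite D"
    using ne by (auto simp: near_extremal_def intro: herm_self_dual_finite)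
  have split: "card {x\<in>D. wt (6 * m) x = 2 * m}
      = card {c\<in>nonzero_shortened D k. wt (6 * m) c = 2 * m}
        + card {x\<in>D. wt (6 * m) x = 2 * m \<and> x k \<noteq> F0}" for k
  proof -
    have "{x\<in>D. wt (6 * m) x = 2 * m}
        = {c\<in>nonzero_shortened D k. wt (6 * m) c = 2 * m} \<union> {x\<in>D. wt (6 * m) x = 2 * m \<and> x k \<noteq> F0}"
      using m by (auto simp: nonzero_shortened_def wt_def)
    then show ?thesis
      using finite_D by (simp add: card_Un_disjoint nonzero_shortened_def disjoint_iff)
  qed
  have "card {c\<in>nonzero_shortened D i. wt (6 * m) c = 2 * m}
      = card {c\<in>nonzero_shortened D 0. wt (6 * m) c = 2 * m}"
  proof -
    have "coeff (shortened_wt_poly D (6 * m) i) (2 * m) = coeff (shortened_wt_poly D (6 * m) 0) (2 * m)"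
      using shortened_wt_poly_indep[OF m ne i, of 0] m by simp
    then show ?thesis
      by (simp add: coeff_shortened_wt_poly[OF finite_D])
  qed
  then show ?thesis
    using split[of i] split[of 0] by linarith
qed

lemma sum_card_coord_nonzero:
  assumes "finite A"
  shows "(\<Sum>k\<in>{0..<n}. card {x\<in>A. x k \<noteq> F0}) = (\<Sum>x\<in>A. wt n x)"
proof -
  have "(\<Sum>k\<in>{0..<n}. card {x\<in>A. x k \<noteq> F0}) = (\<Sum>k\<in>{0..<n}. \<Sum>x\<in>A. if x k \<noteq> F0 then 1 else 0)"
    using assms by (simp add: sum.If_cases Int_def conj_commute)
  also have "\<dots> = (\<Sum>x\<in>A. \<Sum>k\<in>{0..<n}. if x k \<noteq> F0 then 1 else 0)"
    by (rule sum.swap)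
  also have "\<dots> = (\<Sum>x\<in>A. wt n x)"
    by (simp add: wt_def sum.If_cases Int_def conj_commute)
  finally show ?thesis .
qed

lemma double_count_coord_nonzero:
  assumes "finite A" "\<And>x. x \<in> A \<Longrightarrow> wt n x = w" "\<And>k. k < n \<Longrightarrow> card {x\<in>A. x k \<noteq> F0} = N"
  shows "n * N = w * card A"
proof -
  have "n * N = (\<Sum>k\<in>{0..<n}. card {x\<in>A. x k \<noteq> F0})"
    using assms(3) by simp
  also have "\<dots> = (\<Sum>x\<in>A. wt n x)"
    by (rule sum_card_coord_nonzero[OF assms(1)])
  also have "\<dots> = w * card A"
    using assms(2) by simp
  finally show ?thesis .
qed

lemma vscale_apply: "vscale a x k = f4_mul a (x k)"
  by (simp add: vscale_def)

lemma wt_vscale: "a \<noteq> F0 \<Longrightarrow> wt n (vscale a x) = wt n x"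
  by (simp add: wt_def vscale_def)

lemma card_wt_coord_eq_unit:
  assumes lin: "linear_code n D" and a: "a \<noteq> F0"
  shows "card {x\<in>D. wt n x = w \<and> x k = a} = card {x\<in>D. wt n x = w \<and> x k = F1}"
proof -
  have inverse: "f4_mul (f4_conj a) a = F1" "f4_mul a (f4_conj a) = F1"
    using a f4_norm[of a] by (simp_all add: f4_mul_commute)
  have vscale_inverse: "vscale (f4_conj a) (vscale a x) = x" "vscale a (vscale (f4_conj a) x) = x" for x
    using inverse by (simp_all add: vscale_def f4_mul_assoc[symmetric])
  have closed: "vscale b x \<in> D" if "x \<in> D" for b x
    using lin that by (simp add: linear_code_def)
  have "bij_betw (vscale a) {x\<in>D. wt n x = w \<and> x k = F1} {x\<in>D. wt n x = w \<and> x k = a}"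
    by (rule bij_betw_byWitness[where f' = "vscale (f4_conj a)"])
      (use a inverse in \<open>auto simp: vscale_inverse closed wt_vscale vscale_apply\<close>)
  then show ?thesis by (simp add: bij_betw_same_card)
qed

lemma card_wt_coord_nonzero:
  assumes lin: "linear_code n D"
  shows "card {x\<in>D. wt n x = w \<and> x k \<noteq> F0} = 3 * card {x\<in>D. wt n x = w \<and> x k = F1}"
proof -
  let ?S = "\<lambda>a. {x\<in>D. wt n x = w \<and> x k = a}"
  have "{x\<in>D. wt n x = w \<and> x k \<noteq> F0} = ?S F1 \<union> ?S FW \<union> ?S FW2"
    by (auto intro: f4.exhaust)
  moreover have "finite (?S a)" for a
    using linear_code_finite[OF lin] by simp
  ultimately have "card {x\<in>D. wt n x = w \<and> x k \<noteq> F0} = card (?S F1) + card (?S FW) + card (?S FW2)"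
    by (simp add: card_Un_disjoint disjoint_iff)
  then show ?thesis
    using card_wt_coord_eq_unit[OF lin, of FW] card_wt_coord_eq_unit[OF lin, of FW2] by simp
qed

theorem lemma3p4:
  fixes m :: nat and D :: "(nat \<Rightarrow> f4) set"
  assumes "m > 0"
    and "near_extremal (6 * m) D"
  shows "card {x \<in> D. wt (6 * m) x = 2 * m} mod 9 = 0"
proof -
  let ?A = "{x \<in> D. wt (6 * m) x = 2 * m}"
  let ?N = "card {x\<in>D. wt (6 * m) x = 2 * m \<and> x 0 \<noteq> F0}"
  have lin: "linear_code (6 * m) D"
    using assms(2) by (simp add: near_extremal_def herm_self_dual_def)
  have coord_count: "card {x\<in>?A. x k \<noteq> F0} = ?N" if "k < 6 * m" for k
  proof -
    have "{x\<in>?A. x k \<noteq> F0} = {x\<in>D. wt (6 * m) x = 2 * m \<and> x k \<noteq> F0}"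
      by auto
    then show ?thesis
      using card_min_wt_coord_nonzero_indep[OF assms that] by (simp only:)
  qed
  have "6 * m * ?N = 2 * m * card ?A"
    by (rule double_count_coord_nonzero[OF _ _ coord_count]) (use linear_code_finite[OF lin] in auto)
  then have "card ?A = 3 * (3 * card {x\<in>D. wt (6 * m) x = 2 * m \<and> x 0 = F1})"
    using assms(1) card_wt_coord_nonzero[OF lin] by simp
  then show ?thesis
    by simp
qed

end
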